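(* Let $(\mathfrak A,\alpha,\omega)$ be an ergodic $C^*$-dynamical system with GNS covariant representation $(\mathcal H,\pi,U,\Omega)$ such that the support of $\omega$ in $\mathfrak A^{**}$ is central. With $M,M',\mathfrak M,\mathfrak N,\varphi,\psi,\gamma$ as in the context, the state $\psi$ is generic for $(\mathfrak M,\gamma,\varphi)$ w.r.t. $\mathfrak N$, i.e. $\lim_{N\to\infty}\frac1N\sum_{n=0}^{N-1}\psi(\gamma^n(X))=\varphi(X)$ for every $X\in\mathfrak N$.
   Context: A $C^*$-dynamical system $(\mathfrak A,\alpha,\omega)$: $C^*$-algebra $\mathfrak A$, automorphism $\alpha$, $\alpha$-invariant state $\omega$; ergodic means $\lim_N\frac1N\sum_{n=0}^{N-1}\omega(A\alpha^n(B))=\omega(A)\omega(B)$ for all $A,B$ (equivalently the $U$-invariant vectors are $\mathbb C\Omega$). $(\mathcal H,\pi,\Omega)$ is the GNS triple of $\omega$ and $U$ the unitary with $U\pi(A)\Omega=\pi(\alpha(A))\Omega$. Central support is equivalent to $\Omega$ being separating for $M:=\pi(\mathfrak A)''$; $M'$ is the commutant. $\mathfrak N:=M\otimes M'$ is the algebraic tensor product and $\mathfrak M:=M\otimes_{\max}M'$ its completion in the maximal $C^*$-norm. $\varphi$ is the state on $\mathfrak M$ with $\varphi(A\otimes B)=\langle A\Omega,\Omega\rangle\langle B\Omega,\Omega\rangle$ and $\psi$ the state on $\mathfrak M$ with $\psi(A\otimes B)=\langle AB\Omega,\Omega\rangle$ ($A\in M$, $B\in M'$). $\gamma:=\mathrm{Ad}_U\otimes\mathrm{Ad}_{U^2}$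 is the automorphism of $\mathfrak M$ with $\gamma(A\otimes B)=UAU^*\otimes U^2BU^{-2}$. *)

theory Defs
  imports "HOL-Analysis.Analysis"
begin

text \<open>Complex Hilbert spaces, modelled as real Hilbert spaces equipped with an
orthogonal complex structure cJ (multiplication by the imaginary unit).
Scalar multiplication: c x = Re c x + Im c (cJ x).\<close>

class complex_hilbert = real_inner + complete_space +
  fixes cJ :: "'a \<Rightarrow> 'a"
  assumes cJ_add: "cJ (x + y) = cJ x + cJ y"
    and cJ_scaleR: "cJ (r *\<^sub>R x) = r *\<^sub>R cJ x"
    and cJ_cJ: "cJ (cJ x) = - x"
    and cJ_inner: "inner (cJ x) (cJ y) = inner x y"

definition scaleC :: "complex \<Rightarrow> 'a::complex_hilbert \<Rightarrow> 'a" where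
  "scaleC c x = Re c *\<^sub>R x + Im c *\<^sub>R cJ x"

text \<open>Complex inner product, linear in the first, conjugate-linear in the second argument.\<close>
definition cinner :: "'a::complex_hilbert \<Rightarrow> 'a \<Rightarrow> complex" where
  "cinner x y = Complex (inner x y) (inner x (cJ y))"

definition bop :: "('a::complex_hilbert \<Rightarrow> 'a) \<Rightarrow> bool" where
  "bop T \<longleftrightarrow> bounded_linear T \<and> (\<forall>x. T (cJ x) = cJ (T x))"

definition unitary_op :: "('a::complex_hilbert \<Rightarrow> 'a) \<Rightarrow> bool" where
  "unitary_op U \<longleftrightarrow> bop U \<and> U \<circ> adjoint U = id \<and> adjoint U \<circ> U = id"

definition commutant :: "('a::complex_hilbert \<Rightarrow> 'a) set \<Rightarrow> ('a \<Rightarrow> 'a) set" where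
  "commutant S = {T. bop T \<and> (\<forall>A\<in>S. T \<circ> A = A \<circ> T)}"

definition concrete_cstar :: "('a::complex_hilbert \<Rightarrow> 'a) set \<Rightarrow> bool" where
  "concrete_cstar S \<longleftrightarrow>
     (\<forall>A\<in>S. bop A) \<and>
     (\<forall>A\<in>S. \<forall>B\<in>S. (\<lambda>x. A x + B x) \<in> S \<and> A \<circ> B \<in> S) \<and>
     (\<forall>c. \<forall>A\<in>S. (\<lambda>x. scaleC c (A x)) \<in> S) \<and>
     (\<forall>A\<in>S. adjoint A \<in> S) \<and>
     (\<forall>T X. (\<forall>n. X n \<in> S) \<and> bop T \<and> (\<lambda>n. onorm (\<lambda>x. X n x - T x)) \<longlonglongrightarrow> 0
            \<longrightarrow> T \<in> S)"

end

theory Submission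
  imports Defs
begin

(* Since U fixes \<Omega>, the n-th summand is <A U^n B \<Omega>, \<Omega>> = <U^n B \<Omega>, A* \<Omega>>.
   So the theorem is the weak mean ergodic statement
     (1/N) \<Sum>n<N <U^n x, y>  -->  <x, \<Omega>> <\<Omega>, y>     for all x, y,
   applied to x = B \<Omega> and y = A* \<Omega>. Ergodicity gives exactly this limit for x in \<A>\<Omega>
   and y in \<A>*\<Omega>, both dense because \<Omega> is cyclic and \<A> is a *-algebra; since the
   averaged forms are bounded uniformly in N, the convergence extends to all x and y. *)

lemma exists_min_norm_closed_convex:
  fixes S :: "'a::{real_inner,complete_space} set"
  assumes "closed S" "convex S" "S \<noteq> {}"
  obtains w where "w \<in> S" "\<And>x. x \<in> S \<Longrightarrow> norm w \<le> norm x"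
proof -
  define d where "d = Inf (norm ` S)"
  have bdd: "bdd_below (norm ` S)" by (rule bdd_belowI[of _ 0]) auto
  have d_le: "d \<le> norm x" if "x \<in> S" for x
    unfolding d_def using bdd that by (simp add: cInf_lower)
  have "d \<in> closure (norm ` S)"
    unfolding d_def using bdd \<open>S \<noteq> {}\<close> by (intro closure_contains_Inf) auto
  then obtain s where s: "\<And>n. s n \<in> norm ` S" and "s \<longlonglongrightarrow> d"
    unfolding closure_sequential by blast
  have "\<forall>n. \<exists>y. y \<in> S \<and> s n = norm y" using s by blast
  then obtain x where x_S: "\<And>n. x n \<in> S" and s_x: "\<And>n. s n = norm (x n)"
    using choice[of "\<lambda>n y. y \<in> S \<and> s n = norm y"] by blast
  have "s = (\<lambda>n. norm (x n))" using s_x by auto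
  with \<open>s \<longlonglongrightarrow> d\<close> have norm_x: "(\<lambda>n. norm (x n)) \<longlonglongrightarrow> d" by simp
  have excess: "(\<lambda>n. (norm (x n))\<^sup>2 - d\<^sup>2) \<longlonglongrightarrow> 0"
    using tendsto_diff[OF tendsto_power[OF norm_x, of 2] tendsto_const[of "d\<^sup>2"]] by simp
  have d_ge: "0 \<le> d" unfolding d_def using \<open>S \<noteq> {}\<close> by (intro cInf_greatest) auto
  have dist_le: "(dist (x m) (x n))\<^sup>2 \<le> 2 * ((norm (x m))\<^sup>2 - d\<^sup>2) + 2 * ((norm (x n))\<^sup>2 - d\<^sup>2)" for m n
  proof -
    have "(1/2) *\<^sub>R x m + (1/2) *\<^sub>R x n \<in> S"
      using \<open>convex S\<close> x_S by (intro convexD) auto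
    then have "d \<le> norm ((1/2) *\<^sub>R (x m + x n))"
      using d_le by (simp add: scaleR_right_distrib)
    then have "2 * d \<le> norm (x m + x n)" by simp
    then have "(2 * d)\<^sup>2 \<le> (norm (x m + x n))\<^sup>2"
      using d_ge by (intro power_mono) auto
    moreover have "(norm (x m - x n))\<^sup>2 = 2 * (norm (x m))\<^sup>2 + 2 * (norm (x n))\<^sup>2 - (norm (x m + x n))\<^sup>2"
      unfolding power2_norm_eq_inner
      by (simp add: inner_diff_left inner_diff_right inner_add_left inner_add_right inner_commute)
    ultimately show ?thesis by (simp add: dist_norm power_mult_distrib)
  qed
  have "Cauchy x"
  proof (rule metric_CauchyI)
    fix e :: real assume "e > 0"
    then have "\<forall>\<^sub>F n in sequentially. (norm (x n))\<^sup>2 - d\<^sup>2 < e\<^sup>2 / 4"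
      using excess \<open>e > 0\<close> by (intro order_tendstoD) auto
    then obtain M where M: "\<And>n. n \<ge> M \<Longrightarrow> (norm (x n))\<^sup>2 - d\<^sup>2 < e\<^sup>2 / 4"
      unfolding eventually_sequentially by blast
    have "dist (x m) (x n) < e" if "m \<ge> M" "n \<ge> M" for m n
    proof (rule power2_less_imp_less)
      show "(dist (x m) (x n))\<^sup>2 < e\<^sup>2"
        using dist_le[of m n] M[OF that(1)] M[OF that(2)] by argo
    qed (use \<open>e > 0\<close> in simp)
    then show "\<exists>M. \<forall>m\<ge>M. \<forall>n\<ge>M. dist (x m) (x n) < e" by blast
  qed
  then obtain w where "x \<longlonglongrightarrow> w" unfolding convergent_eq_Cauchy[symmetric] convergent_def by blast
  show ?thesis
  proof
    show "w \<in> S" using \<open>closed S\<close> x_S \<open>x \<longlonglongrightarrow> w\<close> closed_sequentially by blast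
    have "norm w = d"
      using tendsto_norm[OF \<open>x \<longlonglongrightarrow> w\<close>] norm_x by (rule LIMSEQ_unique)
    then show "norm w \<le> norm y" if "y \<in> S" for y using d_le[OF that] by simp
  qed
qed

lemma inner_eq_zero_if_norm_le_norm_add_scaleR:
  fixes w k :: "'a::real_inner"
  assumes "\<And>t. norm w \<le> norm (w + t *\<^sub>R k)"
  shows "inner w k = 0"
proof (cases "k = 0")
  case False
  define t where "t = - inner w k / inner k k"
  have "inner k k > 0" using False by simp
  have "(norm w)\<^sup>2 \<le> (norm (w + t *\<^sub>R k))\<^sup>2"
    using assms by (simp add: power_mono)
  also have "\<dots> = (norm w)\<^sup>2 + 2 * t * inner w k + t\<^sup>2 * inner k k"
    unfolding power2_norm_eq_inner
    by (simp add: inner_add_left inner_add_right inner_commute[of k w] algebra_simps power2_eq_square)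
  also have "\<dots> = (norm w)\<^sup>2 - (inner w k)\<^sup>2 / inner k k"
    using \<open>inner k k > 0\<close> by (simp add: t_def power2_eq_square field_simps)
  finally have "(inner w k)\<^sup>2 / inner k k \<le> 0" by simp
  then show ?thesis using \<open>inner k k > 0\<close> by (simp add: divide_le_0_iff)
qed simp

lemma riesz_representation:
  fixes f :: "'a::{real_inner,complete_space} \<Rightarrow> real"
  assumes "bounded_linear f"
  obtains z where "\<And>x. f x = inner z x"
proof (cases "\<forall>x. f x = 0")
  case True
  then show ?thesis using that[of 0] by simp
next
  case False
  interpret f: bounded_linear f by fact
  obtain x0 where "f x0 \<noteq> 0" using False by blast
  \<comment> \<open>the element of least norm in the hyperplane f = 1 is orthogonal to the kernel\<close>
  define S where "S = {x. f x = 1}"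
  have "closed S"
    unfolding S_def by (intro closed_Collect_eq linear_continuous_on assms continuous_on_const)
  moreover have "convex S"
    by (auto simp: S_def convex_def f.add f.scaleR algebra_simps)
  moreover have "x0 /\<^sub>R f x0 \<in> S" using \<open>f x0 \<noteq> 0\<close> by (simp add: S_def f.scaleR)
  ultimately obtain w where "w \<in> S" and w_min: "\<And>x. x \<in> S \<Longrightarrow> norm w \<le> norm x"
    using exists_min_norm_closed_convex by blast
  have orth: "inner w k = 0" if "f k = 0" for k
    using \<open>w \<in> S\<close> that
    by (intro inner_eq_zero_if_norm_le_norm_add_scaleR w_min) (simp add: S_def f.add f.scaleR)
  have "inner w w \<noteq> 0" using \<open>w \<in> S\<close> by (auto simp: S_def)
  show ?thesis
  proof (rule that)
    fix x
    have "inner w (x - f x *\<^sub>R w) = 0"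
      using \<open>w \<in> S\<close> by (intro orth) (simp add: S_def f.diff f.scaleR)
    then have "inner w x = f x * inner w w" by (simp add: inner_diff_right)
    then show "f x = inner (w /\<^sub>R inner w w) x" using \<open>inner w w \<noteq> 0\<close> by simp
  qed
qed

(* HOL-Analysis establishes the defining property of adjoint only on Euclidean spaces;
   on a Hilbert space the adjoint exists by the Riesz representation theorem. *)
lemma adjoint_works_complete:
  fixes f :: "'a::{real_inner,complete_space} \<Rightarrow> 'b::real_inner"
  assumes "bounded_linear f"
  shows "inner (f x) y = inner x (adjoint f y)"
proof -
  have "\<exists>z. \<forall>x. inner (f x) y = inner z x" for y
    using riesz_representation[OF bounded_linear_compose[OF bounded_linear_inner_left assms]]
    by metis
  then obtain g where g: "\<And>y x. inner (f x) y = inner (g y) x" by metis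
  have "adjoint f = g" by (rule adjoint_unique) (metis g inner_commute)
  then show ?thesis by (metis g inner_commute)
qed

lemma adjoint_adjoint_complete:
  fixes f :: "'a::{real_inner,complete_space} \<Rightarrow> 'b::real_inner"
  assumes "bounded_linear f"
  shows "adjoint (adjoint f) = f"
  by (rule adjoint_unique) (metis adjoint_works_complete[OF assms] inner_commute)

lemma bounded_linear_funpow:
  fixes f :: "'a::real_normed_vector \<Rightarrow> 'a"
  assumes "bounded_linear f" shows "bounded_linear (f ^^ n)"
proof (induction n)
  case 0
  show ?case by (simp add: id_def)
next
  case (Suc n)
  then show ?case using bounded_linear_compose[OF assms] by (simp add: comp_def)
qed

lemma tendsto_from_dense_equi_lipschitz:
  fixes F :: "nat \<Rightarrow> 'a::metric_space \<Rightarrow> 'b::metric_space"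
  assumes dense: "closure D = UNIV"
    and F_lip: "\<And>N. C-lipschitz_on UNIV (F N)" and G_lip: "C-lipschitz_on UNIV G"
    and tendsto_D: "\<And>d. d \<in> D \<Longrightarrow> (\<lambda>N. F N d) \<longlonglongrightarrow> G d"
  shows "(\<lambda>N. F N x) \<longlonglongrightarrow> G x"
proof (rule tendstoI)
  fix e :: real assume "e > 0"
  have C: "C \<ge> 0" using G_lip by (rule lipschitz_on_nonneg)
  define \<delta> where "\<delta> = e / (3 * (C + 1))"
  have "\<delta> > 0" using \<open>e > 0\<close> C by (simp add: \<delta>_def)
  moreover have "x \<in> closure D" using dense by simp
  ultimately obtain d where "d \<in> D" and "dist d x < \<delta>"
    using closure_approachable by metis
  have C\<delta>: "C * dist d x \<le> e / 3"
  proof -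
    have "C * dist d x \<le> (C + 1) * \<delta>"
      using \<open>dist d x < \<delta>\<close> C by (intro mult_mono) auto
    also have "\<dots> = e / 3" using C by (simp add: \<delta>_def field_simps)
    finally show ?thesis .
  qed
  have "\<forall>\<^sub>F N in sequentially. dist (F N d) (G d) < e / 3"
    using tendstoD[OF tendsto_D[OF \<open>d \<in> D\<close>], of "e / 3"] \<open>e > 0\<close> by simp
  then show "\<forall>\<^sub>F N in sequentially. dist (F N x) (G x) < e"
  proof eventually_elim
    case (elim N)
    have "dist (F N x) (G x) \<le> dist (F N x) (F N d) + dist (F N d) (G d) + dist (G d) (G x)"
      using dist_triangle[of "F N x" "G x" "F N d"] dist_triangle[of "F N d" "G x" "G d"] by linarith
    moreover have "dist (F N x) (F N d) \<le> e / 3"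
      using lipschitz_onD[OF F_lip] C\<delta> by (metis UNIV_I dist_commute order_trans)
    moreover have "dist (G d) (G x) \<le> e / 3"
      using lipschitz_onD[OF G_lip] C\<delta> by (meson UNIV_I order_trans)
    ultimately show ?case using elim by linarith
  qed
qed

lemma bounded_bilinear_lipschitz:
  fixes p :: "'a::real_normed_vector \<Rightarrow> 'b::real_normed_vector \<Rightarrow> 'c::real_normed_vector"
  assumes "bounded_bilinear p" and bound: "\<And>x y. norm (p x y) \<le> norm x * norm y * K"
    and "K \<le> M" "0 \<le> M"
  shows "(M * norm x)-lipschitz_on UNIV (p x)" and "(M * norm y)-lipschitz_on UNIV (\<lambda>x. p x y)"
proof -
  interpret p: bounded_bilinear p by fact
  have "norm x * norm y * K \<le> M * norm x * norm y" for x y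
    using mult_right_mono[OF \<open>K \<le> M\<close>, of "norm x * norm y"] by (simp add: mult_ac)
  then have le: "norm (p x y) \<le> M * norm x * norm y" for x y
    using bound order_trans by blast
  show "(M * norm x)-lipschitz_on UNIV (p x)"
  proof (rule lipschitz_onI)
    fix a a' :: 'b
    show "dist (p x a) (p x a') \<le> M * norm x * dist a a'"
      using le[of x "a - a'"] by (simp add: dist_norm p.diff_right)
  qed (simp add: \<open>0 \<le> M\<close>)
  show "(M * norm y)-lipschitz_on UNIV (\<lambda>x. p x y)"
  proof (rule lipschitz_onI)
    fix a a' :: 'a
    show "dist (p a y) (p a' y) \<le> M * norm y * dist a a'"
      using le[of "a - a'" y] by (simp add: dist_norm p.diff_left mult_ac)
  qed (simp add: \<open>0 \<le> M\<close>)
qed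

lemma bilinear_tendsto_from_dense:
  fixes b :: "nat \<Rightarrow> 'a::real_normed_vector \<Rightarrow> 'b::real_normed_vector \<Rightarrow> 'c::real_normed_vector"
  assumes b: "\<And>N. bounded_bilinear (b N)"
    and b_bound: "\<And>N x y. norm (b N x y) \<le> norm x * norm y * K"
    and c: "bounded_bilinear c"
    and dense1: "closure D1 = UNIV" and dense2: "closure D2 = UNIV"
    and tendsto_D: "\<And>x y. x \<in> D1 \<Longrightarrow> y \<in> D2 \<Longrightarrow> (\<lambda>N. b N x y) \<longlonglongrightarrow> c x y"
  shows "(\<lambda>N. b N x y) \<longlonglongrightarrow> c x y"
proof -
  obtain L where "L > 0" and c_bound: "\<And>x y. norm (c x y) \<le> norm x * norm y * L"
    using bounded_bilinear.pos_bounded[OF c] by blast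
  define M where "M = max K L"
  have M: "K \<le> M" "L \<le> M" "0 \<le> M" using \<open>L > 0\<close> by (auto simp: M_def)
  note b_lip = bounded_bilinear_lipschitz[OF b b_bound M(1,3)]
  note c_lip = bounded_bilinear_lipschitz[OF c c_bound M(2,3)]
  have tendsto_D1: "(\<lambda>N. b N x' y) \<longlonglongrightarrow> c x' y" if "x' \<in> D1" for x' y
    using dense2 b_lip(1) c_lip(1) tendsto_D[OF that]
    by (rule tendsto_from_dense_equi_lipschitz)
  show ?thesis
    using dense1 b_lip(2) c_lip(2) tendsto_D1
    by (rule tendsto_from_dense_equi_lipschitz[where F = "\<lambda>N x. b N x y"])
qed

lemma inner_cJ_left: "inner (cJ x) y = - inner x (cJ y)"
  by (metis cJ_cJ cJ_inner inner_minus_left)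

lemma norm_cJ: "norm (cJ x) = norm x"
  by (simp add: norm_eq_sqrt_inner cJ_inner)

(* The constant 2 is not sharp (1 is), but any uniform constant will do. *)
lemma norm_cinner_le: "norm (cinner x y) \<le> norm x * norm y * 2"
proof -
  have "norm (cinner x y) \<le> \<bar>inner x y\<bar> + \<bar>inner x (cJ y)\<bar>"
    using cmod_le[of "cinner x y"] by (simp add: cinner_def)
  also have "\<dots> \<le> norm x * norm y + norm x * norm (cJ y)"
    by (intro add_mono Cauchy_Schwarz_ineq2)
  finally show ?thesis by (simp add: norm_cJ)
qed

lemma bounded_bilinear_cinner: "bounded_bilinear (cinner :: 'a::complex_hilbert \<Rightarrow> 'a \<Rightarrow> complex)"
proof
  fix a a' b b' :: 'a and r :: real
  show "cinner (a + a') b = cinner a b + cinner a' b"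
    by (simp add: cinner_def complex_eq_iff inner_add_left)
  show "cinner a (b + b') = cinner a b + cinner a b'"
    by (simp add: cinner_def complex_eq_iff inner_add_right cJ_add)
  show "cinner (r *\<^sub>R a) b = r *\<^sub>R cinner a b"
    by (simp add: cinner_def complex_eq_iff)
  show "cinner a (r *\<^sub>R b) = r *\<^sub>R cinner a b"
    by (simp add: cinner_def complex_eq_iff cJ_scaleR)
qed (use norm_cinner_le in blast)

lemma cinner_adjoint:
  fixes T :: "'a::complex_hilbert \<Rightarrow> 'a"
  assumes "bop T"
  shows "cinner (T x) y = cinner x (adjoint T y)"
proof -
  have bl: "bounded_linear T" and T_cJ: "\<And>x. T (cJ x) = cJ (T x)"
    using assms by (auto simp: bop_def)
  note adj = adjoint_works_complete[OF bl]
  have "inner z (adjoint T (cJ y)) = inner z (cJ (adjoint T y))" for z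
  proof -
    have "inner z (adjoint T (cJ y)) = - inner (T (cJ z)) y"
      by (simp add: adj[symmetric] inner_cJ_left T_cJ)
    also have "\<dots> = inner z (cJ (adjoint T y))"
      by (simp add: adj inner_cJ_left)
    finally show ?thesis .
  qed
  then have "adjoint T (cJ y) = cJ (adjoint T y)" using vector_eq_ldot by blast
  then show ?thesis by (simp add: cinner_def adj)
qed

lemma adjoint_unitary_apply:
  assumes "unitary_op U" shows "adjoint U (U x) = x"
  using assms by (simp add: unitary_op_def fun_eq_iff)

lemma norm_unitary:
  assumes "unitary_op U" shows "norm (U x) = norm x"
proof -
  have "bounded_linear U" using assms by (simp add: unitary_op_def bop_def)
  then have "inner (U x) (U x) = inner x x"
    by (simp add: adjoint_works_complete adjoint_unitary_apply[OF assms])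
  then show ?thesis by (simp add: norm_eq_sqrt_inner)
qed

lemma norm_funpow_unitary:
  assumes "unitary_op U" shows "norm ((U ^^ n) x) = norm x"
  by (induction n) (simp_all add: norm_unitary[OF assms])

lemma funpow_adjoint_funpow_unitary:
  assumes "unitary_op U" shows "(adjoint U ^^ n) ((U ^^ (n + m)) x) = (U ^^ m) x"
proof (induction n)
  case (Suc n)
  have "(adjoint U ^^ Suc n) y = (adjoint U ^^ n) (adjoint U y)" for y
    by (simp add: funpow_Suc_right del: funpow.simps)
  then show ?case using Suc.IH by (simp add: adjoint_unitary_apply[OF assms])
qed simp

lemma adjoint_unitary_fixed:
  assumes "unitary_op U" "U \<Omega> = \<Omega>" shows "adjoint U \<Omega> = \<Omega>"
  using adjoint_unitary_apply[OF assms(1), of \<Omega>] assms(2) by simp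

lemma funpow_adjoint_unitary_fixed:
  assumes "unitary_op U" "U \<Omega> = \<Omega>" shows "(adjoint U ^^ n) \<Omega> = \<Omega>"
  by (induction n) (simp_all add: adjoint_unitary_fixed[OF assms])

lemma cinner_funpow_unitary_fixed:
  assumes "unitary_op U" "U \<Omega> = \<Omega>" shows "cinner ((U ^^ n) x) \<Omega> = cinner x \<Omega>"
proof (induction n)
  case (Suc n)
  have "bop U" using assms(1) by (simp add: unitary_op_def)
  then have "cinner ((U ^^ Suc n) x) \<Omega> = cinner ((U ^^ n) x) (adjoint U \<Omega>)"
    by (simp add: cinner_adjoint)
  then show ?case using Suc.IH by (simp add: adjoint_unitary_fixed[OF assms])
qed simp

lemma conjugated_product_apply_fixed:
  assumes "unitary_op U" "U \<Omega> = \<Omega>"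
  shows "((U^^n) \<circ> A \<circ> (adjoint U^^n) \<circ> (U^^(2*n)) \<circ> B \<circ> (adjoint U^^(2*n))) \<Omega>
    = (U^^n) (A ((U^^n) (B \<Omega>)))"
  using funpow_adjoint_funpow_unitary[OF assms(1), of n n]
  by (simp add: funpow_adjoint_unitary_fixed[OF assms] mult_2)

locale ergodic_gns_system =
  fixes \<A> :: "('h::complex_hilbert \<Rightarrow> 'h) set" and U :: "'h \<Rightarrow> 'h" and \<Omega> :: 'h
  assumes cstar: "concrete_cstar \<A>"
    and cyclic: "closure {A \<Omega> | A. A \<in> \<A>} = UNIV"
    and unitary: "unitary_op U"
    and inv_vec: "U \<Omega> = \<Omega>"
    and ergodic: "\<forall>A\<in>\<A>. \<forall>B\<in>\<A>.
        (\<lambda>N. (\<Sum>n<N. cinner (A ((U^^n) (B \<Omega>))) \<Omega>) / of_nat N)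
          \<longlonglongrightarrow> cinner (A \<Omega>) \<Omega> * cinner (B \<Omega>) \<Omega>"
begin

lemma bop_of_mem: "A \<in> \<A> \<Longrightarrow> bop A"
  using cstar unfolding concrete_cstar_def by blast

lemma adjoint_vectors_dense: "closure {adjoint A \<Omega> | A. A \<in> \<A>} = UNIV"
proof -
  have "{A \<Omega> | A. A \<in> \<A>} \<subseteq> {adjoint A \<Omega> | A. A \<in> \<A>}"
  proof safe
    fix A assume "A \<in> \<A>"
    then have "adjoint A \<in> \<A>" using cstar unfolding concrete_cstar_def by blast
    moreover have "bounded_linear A" using bop_of_mem[OF \<open>A \<in> \<A>\<close>] by (simp add: bop_def)
    ultimately show "\<exists>A'. A \<Omega> = adjoint A' \<Omega> \<and> A' \<in> \<A>"
      by (intro exI[of _ "adjoint A"]) (simp add: adjoint_adjoint_complete)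
  qed
  then have "closure {A \<Omega> | A. A \<in> \<A>} \<subseteq> closure {adjoint A \<Omega> | A. A \<in> \<A>}"
    by (rule closure_mono)
  with cyclic show ?thesis by auto
qed

lemma cesaro_cinner_tendsto_generators:
  assumes "A \<in> \<A>" "B \<in> \<A>"
  shows "(\<lambda>N. (\<Sum>n<N. cinner ((U^^n) (B \<Omega>)) (adjoint A \<Omega>)) / of_nat N)
    \<longlonglongrightarrow> cinner (B \<Omega>) \<Omega> * cinner \<Omega> (adjoint A \<Omega>)"
proof -
  have "bop A" using assms(1) by (rule bop_of_mem)
  then show ?thesis using ergodic assms by (simp add: cinner_adjoint[symmetric] mult.commute)
qed

lemma cesaro_cinner_tendsto:
  "(\<lambda>N. (\<Sum>n<N. cinner ((U^^n) x) y) / of_nat N) \<longlonglongrightarrow> cinner x \<Omega> * cinner \<Omega> y"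
proof -
  interpret cinner: bounded_bilinear cinner by (rule bounded_bilinear_cinner)
  have U_bl: "bounded_linear U" using unitary by (simp add: unitary_op_def bop_def)
  define avg where "avg N x = (1 / real N) *\<^sub>R (\<Sum>n<N. (U^^n) x)" for N x
  have avg_cinner: "cinner (avg N x) y = (\<Sum>n<N. cinner ((U^^n) x) y) / of_nat N" for N x y
    by (simp add: avg_def cinner.scaleR_left cinner.sum_left scaleR_conv_of_real divide_inverse_commute)
  have avg_bl: "bounded_linear (avg N)" for N
    unfolding avg_def
    by (intro bounded_linear_compose[OF bounded_linear_scaleR_right] bounded_linear_sum
        bounded_linear_funpow U_bl)
  have avg_norm: "norm (avg N x) \<le> norm x" for N x
  proof -
    have "norm (\<Sum>n<N. (U^^n) x) \<le> real N * norm x"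
      using norm_sum[of "\<lambda>n. (U^^n) x" "{..<N}"] by (simp add: norm_funpow_unitary[OF unitary])
    then show ?thesis by (cases "N = 0") (auto simp: avg_def field_simps)
  qed
  have "(\<lambda>N. cinner (avg N x) y) \<longlonglongrightarrow> cinner x \<Omega> * cinner \<Omega> y"
  proof (rule bilinear_tendsto_from_dense[where b = "\<lambda>N x y. cinner (avg N x) y" and K = 2
        and c = "\<lambda>x y. cinner x \<Omega> * cinner \<Omega> y"])
    show "bounded_bilinear (\<lambda>x y. cinner (avg N x) y)" for N
      by (rule cinner.comp1[OF avg_bl])
    show "norm (cinner (avg N x) y) \<le> norm x * norm y * 2" for N x y
    proof -
      have "norm (cinner (avg N x) y) \<le> norm (avg N x) * norm y * 2" by (rule norm_cinner_le)
      also have "\<dots> \<le> norm x * norm y * 2" using avg_norm[of N x] by (simp add: mult_right_mono)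
      finally show ?thesis .
    qed
    show "bounded_bilinear (\<lambda>x y. cinner x \<Omega> * cinner \<Omega> y)"
      by (rule bounded_bilinear.comp[OF bounded_bilinear_mult cinner.bounded_linear_left
            cinner.bounded_linear_right])
    show "closure {A \<Omega> | A. A \<in> \<A>} = UNIV" by (fact cyclic)
    show "closure {adjoint A \<Omega> | A. A \<in> \<A>} = UNIV" by (rule adjoint_vectors_dense)
  next
    fix x y assume "x \<in> {B \<Omega> | B. B \<in> \<A>}" "y \<in> {adjoint A \<Omega> | A. A \<in> \<A>}"
    then show "(\<lambda>N. cinner (avg N x) y) \<longlonglongrightarrow> cinner x \<Omega> * cinner \<Omega> y"
      using cesaro_cinner_tendsto_generators by (auto simp: avg_cinner)
  qed
  then show ?thesis by (simp add: avg_cinner)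
qed

lemma conjugated_average_tendsto:
  assumes "bop A"
  shows "(\<lambda>N. (\<Sum>n<N. cinner (((U^^n) \<circ> A \<circ> (adjoint U^^n) \<circ>
                            (U^^(2*n)) \<circ> B \<circ> (adjoint U^^(2*n))) \<Omega>) \<Omega>) / of_nat N)
    \<longlonglongrightarrow> cinner (A \<Omega>) \<Omega> * cinner (B \<Omega>) \<Omega>"
proof -
  have "cinner (((U^^n) \<circ> A \<circ> (adjoint U^^n) \<circ> (U^^(2*n)) \<circ> B \<circ> (adjoint U^^(2*n))) \<Omega>) \<Omega>
      = cinner ((U^^n) (B \<Omega>)) (adjoint A \<Omega>)" for n
    unfolding conjugated_product_apply_fixed[OF unitary inv_vec]
    by (simp add: cinner_funpow_unitary_fixed[OF unitary inv_vec] cinner_adjoint[OF assms])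
  moreover have "cinner \<Omega> (adjoint A \<Omega>) = cinner (A \<Omega>) \<Omega>"
    by (simp add: cinner_adjoint[OF assms])
  ultimately show ?thesis
    using cesaro_cinner_tendsto[of "B \<Omega>" "adjoint A \<Omega>"] by (simp add: mult.commute)
qed

lemma conjugated_average_sum_tendsto:
  assumes "\<And>i. i < k \<Longrightarrow> bop (A i)"
  shows "(\<lambda>N. (\<Sum>n<N. \<Sum>i<k. cinner (((U^^n) \<circ> A i \<circ> (adjoint U^^n) \<circ>
                            (U^^(2*n)) \<circ> B i \<circ> (adjoint U^^(2*n))) \<Omega>) \<Omega>) / of_nat N)
    \<longlonglongrightarrow> (\<Sum>i<k. cinner (A i \<Omega>) \<Omega> * cinner (B i \<Omega>) \<Omega>)"
  unfolding sum.swap[where B = "{..<k}"] sum_divide_distrib[where A = "{..<k}"]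
  using assms by (intro tendsto_sum conjugated_average_tendsto) simp

end

theorem proposition5p1:
  fixes \<A> :: "('h::complex_hilbert \<Rightarrow> 'h) set"
    and U :: "'h \<Rightarrow> 'h"
    and \<Omega> :: 'h
  assumes cstar: "concrete_cstar \<A>"
    and unit_vec: "norm \<Omega> = 1"
    and cyclic: "closure {A \<Omega> | A. A \<in> \<A>} = UNIV"
    and unitary: "unitary_op U"
    and inv_vec: "U \<Omega> = \<Omega>"
    and aut: "\<forall>A\<in>\<A>. U \<circ> A \<circ> adjoint U \<in> \<A> \<and> adjoint U \<circ> A \<circ> U \<in> \<A>"
    and ergodic: "\<forall>A\<in>\<A>. \<forall>B\<in>\<A>.
        (\<lambda>N. (\<Sum>n<N. cinner (A ((U^^n) (B \<Omega>))) \<Omega>) / of_nat N)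
          \<longlonglongrightarrow> cinner (A \<Omega>) \<Omega> * cinner (B \<Omega>) \<Omega>"
    and separating: "\<forall>T\<in>commutant (commutant \<A>). T \<Omega> = 0 \<longrightarrow> T = (\<lambda>x. 0)"
  shows "\<forall>(k::nat) (A :: nat \<Rightarrow> 'h \<Rightarrow> 'h) (B :: nat \<Rightarrow> 'h \<Rightarrow> 'h).
           (\<forall>i<k. A i \<in> commutant (commutant \<A>) \<and> B i \<in> commutant \<A>) \<longrightarrow>
           (\<lambda>N. (\<Sum>n<N. \<Sum>i<k.
                   cinner (((U^^n) \<circ> A i \<circ> (adjoint U^^n) \<circ>
                            (U^^(2*n)) \<circ> B i \<circ> (adjoint U^^(2*n))) \<Omega>) \<Omega>) / of_nat N)
             \<longlonglongrightarrow> (\<Sum>i<k. cinner (A i \<Omega>) \<Omega> * cinner (B i \<Omega>) \<Omega>)"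
proof -
  interpret ergodic_gns_system \<A> U \<Omega>
    using cstar cyclic unitary inv_vec ergodic by unfold_locales
  show ?thesis
    by (intro allI impI conjugated_average_sum_tendsto) (simp add: commutant_def)
qed

end
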